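(* Let $\mathcal{X}$ be countable and $\mathcal{H}\subseteq\{0,1\}^{\mathcal{X}}$ a class with $\mathtt{RepDim}(\mathcal{H})<\infty$. Then $\mathtt{CD}^\star(\mathcal{H})<\infty$.
   Context: A dataset of size $m$ is $S=((x_1,y_1),\dots,(x_m,y_m))\in(\mathcal{X}\times\{0,1\})^m$; it is $\mathcal{H}$-realizable if some $h\in\mathcal{H}$ satisfies $h(x_i)=y_i$ for all $i$. $G_m(\mathcal{H})$ is the graph on realizable datasets of size $m$ with $S,S'$ adjacent iff there is $x$ with $(x,0)$ appearing in $S$ and $(x,1)$ appearing in $S'$. A fractional clique of a graph $G=(V,E)$ is $\delta:V\to[0,\infty)$ with $\sum_{v\in I}\delta(v)\le1$ for every independent set $I$; $\omega^\star_m$ is the supremum of $\sum_v\delta(v)$ over fractional cliques of $G_m(\mathcal{H})$; $\mathtt{CD}^\star(\mathcal{H})=\sup\{m:\omega^\star_m=2^m\}$. For a distribution $\mathcal{D}$ on $\mathcal{X}\times\{0,1\}$, $L_{\mathcal{D}}(h)=\Pr_{(x,y)\sim\mathcal{D}}[h(x)\neq y]$, and $\mathcal{D}$ is realizable if $\inf_{h\in\mathcal{H}}L_{\mathcal{D}}(h)=0$. The representation dimension $\mathtt{RepDim}(\mathcal{H})$ is $\ln k$, where $k$ is the minimal integer for which there is a probability distribution $\mathcal{P}$ over hypothesis classes $\mathcal{C}\subseteq\{0,1\}^{\mathcal{X}}$ of size $k$ such that for every realizable $\mathcal{D}$, $\Pr_{\mathcal{C}\sim\mathcal{P}}[\exists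 h\in\mathcal{C}: L_{\mathcal{D}}(h)\le 1/4]\ge 3/4$ (and $\infty$ if no such $k$ exists). *)

theory Defs
  imports "HOL-Probability.Probability"
begin

type_synonym 'a dataset = "('a \<times> bool) list"

definition realizable_set :: "('a \<Rightarrow> bool) set \<Rightarrow> 'a dataset \<Rightarrow> bool" where
  "realizable_set H S \<longleftrightarrow> (\<exists>h\<in>H. \<forall>(x,y)\<in>set S. h x = y)"

definition G_vertices :: "('a \<Rightarrow> bool) set \<Rightarrow> nat \<Rightarrow> 'a dataset set" where
  "G_vertices H m = {S. length S = m \<and> realizable_set H S}"

definition G_adj :: "'a dataset \<Rightarrow> 'a dataset \<Rightarrow> bool" where
  "G_adj S S' \<longleftrightarrow> (\<exists>x. ((x,False) \<in> set S \<and> (x,True) \<in> set S') \<or>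
                        ((x,True) \<in> set S \<and> (x,False) \<in> set S'))"

definition G_independent :: "('a \<Rightarrow> bool) set \<Rightarrow> nat \<Rightarrow> 'a dataset set \<Rightarrow> bool" where
  "G_independent H m I \<longleftrightarrow> I \<subseteq> G_vertices H m \<and> (\<forall>S\<in>I. \<forall>S'\<in>I. \<not> G_adj S S')"

definition nn_sum :: "('b \<Rightarrow> real) \<Rightarrow> 'b set \<Rightarrow> ereal" where
  "nn_sum \<delta> A = (SUP F\<in>{F. F \<subseteq> A \<and> finite F}. ereal (sum \<delta> F))"

definition frac_clique :: "('a \<Rightarrow> bool) set \<Rightarrow> nat \<Rightarrow> ('a dataset \<Rightarrow> real) \<Rightarrow> bool" where
  "frac_clique H m \<delta> \<longleftrightarrow> (\<forall>v\<in>G_vertices H m. \<delta> v \<ge> 0) \<and>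
     (\<forall>I. G_independent H m I \<longrightarrow> nn_sum \<delta> I \<le> 1)"

definition omega_star :: "('a \<Rightarrow> bool) set \<Rightarrow> nat \<Rightarrow> ereal" where
  "omega_star H m = (SUP \<delta>\<in>{\<delta>. frac_clique H m \<delta>}. nn_sum \<delta> (G_vertices H m))"

definition CD_star_finite :: "('a \<Rightarrow> bool) set \<Rightarrow> bool" where
  "CD_star_finite H \<longleftrightarrow> (\<exists>N. \<forall>m. omega_star H m = ereal (2 ^ m) \<longrightarrow> m \<le> N)"

text \<open>Distributions on the countable (discrete) space X \<times> {0,1} are pmfs.\<close>
definition loss :: "('a \<times> bool) pmf \<Rightarrow> ('a \<Rightarrow> bool) \<Rightarrow> real" where
  "loss D h = measure_pmf.prob D {(x,y). h x \<noteq> y}"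

definition realizable_dist :: "('a \<Rightarrow> bool) set \<Rightarrow> ('a \<times> bool) pmf \<Rightarrow> bool" where
  "realizable_dist H D \<longleftrightarrow> (\<forall>\<epsilon>>0. \<exists>h\<in>H. loss D h < \<epsilon>)"

definition rep_ok :: "('a \<Rightarrow> bool) set \<Rightarrow> nat \<Rightarrow> bool" where
  "rep_ok H k \<longleftrightarrow> (\<exists>P :: ('a \<Rightarrow> bool) set measure. prob_space P \<and>
      (\<forall>C\<in>space P. finite C \<and> card C = k) \<and>
      (\<forall>D. realizable_dist H D \<longrightarrow>
          {C\<in>space P. \<exists>h\<in>C. loss D h \<le> 1/4} \<in> sets P \<and>
          measure P {C\<in>space P. \<exists>h\<in>C. loss D h \<le> 1/4} \<ge> 3/4))"

definition RepDim :: "('a \<Rightarrow> bool) set \<Rightarrow> ereal" where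
  "RepDim H = (if \<exists>k. rep_ok H k then ereal (ln (real (LEAST k. rep_ok H k))) else \<infinity>)"

end

theory Submission imports Defs begin

text \<open>
Suppose \<open>P\<close> is a random family of \<open>k\<close> hypotheses that, with probability \<open>3/4\<close>, contains a
hypothesis of loss at most \<open>1/4\<close> for every realizable distribution, and let \<open>\<delta>\<close> be a fractional
clique of \<open>G\<^sub>m(H)\<close>. For a fixed hypothesis \<open>h\<close>, flip each label of \<open>h\<close> independently with
probability \<open>1/4\<close>; the datasets consistent with the resulting random labelling form an independent
set, so the total \<open>\<delta>\<close>-weight of the datasets, each weighted by its probability of being consistent,
is at most \<open>1\<close>. A dataset \<open>S\<close> on which \<open>h\<close> errs on at most a quarter of the points is consistent
with probability at least \<open>c = (27/16)\<^bsup>m div 4\<^esup> / 2\<^sup>m\<close>. Applying the guarantee of \<open>P\<close> to the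
empirical distribution of each \<open>S\<close> and summing over the \<open>k\<close> hypotheses of the family gives
\<open>(3/4) \<Sigma> \<delta> \<le> k / c\<close>. As \<open>c 2\<^sup>m\<close> grows exponentially in \<open>m\<close>, the fractional clique number
falls below \<open>2\<^sup>m\<close> for all large \<open>m\<close>.
\<close>

definition version_space :: "'a dataset \<Rightarrow> ('a \<Rightarrow> bool) set" where
  "version_space S = {g. \<forall>(x, y)\<in>set S. g x = y}"

lemma ereal_sum_le_nn_sum: "finite I \<Longrightarrow> I \<subseteq> A \<Longrightarrow> ereal (sum \<delta> I) \<le> nn_sum \<delta> A"
  unfolding nn_sum_def by (rule SUP_upper) auto

lemma G_independent_version_space:
  assumes "F \<subseteq> G_vertices H m"
  shows "G_independent H m {S\<in>F. g \<in> version_space S}"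
proof -
  have "\<not> G_adj S S'" if "g \<in> version_space S" "g \<in> version_space S'" for S S'
    using that unfolding G_adj_def version_space_def by fastforce
  then show ?thesis
    unfolding G_independent_def using assms by blast
qed

lemma frac_clique_sum_version_space_le_1:
  assumes "frac_clique H m \<delta>" "finite F" "F \<subseteq> G_vertices H m"
  shows "(\<Sum>S\<in>{S\<in>F. g \<in> version_space S}. \<delta> S) \<le> 1"
proof -
  have "ereal (\<Sum>S\<in>{S\<in>F. g \<in> version_space S}. \<delta> S) \<le> nn_sum \<delta> {S\<in>F. g \<in> version_space S}"
    using assms(2) by (intro ereal_sum_le_nn_sum) auto
  also have "\<dots> \<le> 1"
    using assms G_independent_version_space unfolding frac_clique_def by blast
  finally show ?thesis by simp
qed

lemma frac_clique_sum_prob_version_space_le_1: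
  fixes \<mu> :: "('a \<Rightarrow> bool) pmf"
  assumes fc: "frac_clique H m \<delta>" and F: "finite F" "F \<subseteq> G_vertices H m"
  shows "(\<Sum>S\<in>F. \<delta> S * measure_pmf.prob \<mu> (version_space S)) \<le> 1"
proof -
  have int: "integrable (measure_pmf \<mu>) (\<lambda>g. \<delta> S * indicator (version_space S) g)" for S
    by (intro integrable_mult_right integrable_real_indicator)
       (simp_all add: measure_pmf.emeasure_finite less_top[symmetric])
  have pointwise: "(\<Sum>S\<in>F. \<delta> S * indicator (version_space S) g) \<le> 1" for g
  proof -
    have "(\<Sum>S\<in>F. \<delta> S * indicator (version_space S) g) = (\<Sum>S\<in>F. if g \<in> version_space S then \<delta> S else 0)"
      by (rule sum.cong) simp_all
    then show ?thesis
      using frac_clique_sum_version_space_le_1[OF fc F, of g] by (simp add: sum.inter_filter[OF F(1)])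
  qed
  have "(\<Sum>S\<in>F. \<delta> S * measure_pmf.prob \<mu> (version_space S)) =
        measure_pmf.expectation \<mu> (\<lambda>g. \<Sum>S\<in>F. \<delta> S * indicator (version_space S) g)"
    by (subst Bochner_Integration.integral_sum[OF int]) simp
  also have "\<dots> \<le> 1"
    by (intro measure_pmf.integral_le_const AE_pmfI pointwise Bochner_Integration.integrable_sum int)
  finally show ?thesis .
qed

lemma realizable_set_label_unique:
  assumes "realizable_set H S" "(x, y) \<in> set S" "(x, y') \<in> set S"
  shows "y = y'"
proof -
  obtain h where "\<forall>(x, y)\<in>set S. h x = y"
    using assms(1) unfolding realizable_set_def by blast
  then have "h x = y" "h x = y'" using assms(2,3) by auto
  then show ?thesis by simp
qed

lemma inj_on_fst_realizable_set:
  assumes "realizable_set H S"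
  shows "inj_on fst (set S)"
proof (rule inj_onI)
  fix p q assume "p \<in> set S" "q \<in> set S" "fst p = fst q"
  have "(fst p, snd p) \<in> set S" using \<open>p \<in> set S\<close> by simp
  moreover have "(fst p, snd q) \<in> set S" using \<open>q \<in> set S\<close> \<open>fst p = fst q\<close> by simp
  ultimately have "snd p = snd q" by (rule realizable_set_label_unique[OF assms])
  with \<open>fst p = fst q\<close> show "p = q" by (simp add: prod_eq_iff)
qed

lemma version_space_eq_Pi:
  assumes "realizable_set H S"
  shows "version_space S = Pi (fst ` set S) (\<lambda>x. {y. (x, y) \<in> set S})"
proof
  show "version_space S \<subseteq> Pi (fst ` set S) (\<lambda>x. {y. (x, y) \<in> set S})"
  proof (intro subsetI Pi_I)
    fix g x assume g: "g \<in> version_space S" and "x \<in> fst ` set S"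
    then obtain p where p: "p \<in> set S" "x = fst p" by blast
    with g have "g x = snd p" unfolding version_space_def by auto
    with p show "g x \<in> {y. (x, y) \<in> set S}" by simp
  qed
  show "Pi (fst ` set S) (\<lambda>x. {y. (x, y) \<in> set S}) \<subseteq> version_space S"
  proof
    fix g assume g: "g \<in> Pi (fst ` set S) (\<lambda>x. {y. (x, y) \<in> set S})"
    have "g x = y" if xy: "(x, y) \<in> set S" for x y
    proof (rule realizable_set_label_unique[OF assms _ xy])
      have "x \<in> fst ` set S" using xy by (rule rev_image_eqI) simp
      from Pi_mem[OF g this] show "(x, g x) \<in> set S" by simp
    qed
    then show "g \<in> version_space S" unfolding version_space_def by auto
  qed
qed

definition noisy_label_prob :: "('a \<Rightarrow> bool) \<Rightarrow> 'a \<times> bool \<Rightarrow> real" where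
  "noisy_label_prob h p = (if h (fst p) = snd p then 3/4 else 1/4)"

definition noisy_pmf :: "('a \<Rightarrow> bool) \<Rightarrow> 'a set \<Rightarrow> ('a \<Rightarrow> bool) pmf" where
  "noisy_pmf h U = Pi_pmf U False (\<lambda>x. bernoulli_pmf (if h x then 3/4 else 1/4))"

lemma noisy_label_prob_pos: "noisy_label_prob h p > 0"
  unfolding noisy_label_prob_def by simp

lemma prob_noisy_pmf_version_space:
  assumes R: "realizable_set H S" and U: "finite U" "fst ` set S \<subseteq> U"
  shows "measure_pmf.prob (noisy_pmf h U) (version_space S) = (\<Prod>p\<in>set S. noisy_label_prob h p)"
proof -
  let ?A = "fst ` set S" and ?q = "\<lambda>x. bernoulli_pmf (if h x then 3/4 else 1/4)"
  define B where "B x = {y. (x, y) \<in> set S}" for x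
  define B' where "B' x = (if x \<in> ?A then B x else UNIV)" for x
  have "version_space S = Pi U B'"
    using U(2) unfolding version_space_eq_Pi[OF R] B_def B'_def Pi_def by auto
  then have "measure_pmf.prob (noisy_pmf h U) (version_space S) =
             (\<Prod>x\<in>U. measure_pmf.prob (?q x) (B' x))"
    unfolding noisy_pmf_def by (simp add: measure_Pi_pmf_Pi U(1))
  also have "\<dots> = (\<Prod>x\<in>?A. measure_pmf.prob (?q x) (B x))"
    by (rule prod.mono_neutral_cong_right[OF U]) (auto simp: B'_def)
  also have "\<dots> = (\<Prod>p\<in>set S. measure_pmf.prob (?q (fst p)) (B (fst p)))"
    by (rule prod.reindex[OF inj_on_fst_realizable_set[OF R], unfolded comp_def])
  also have "\<dots> = (\<Prod>p\<in>set S. noisy_label_prob h p)"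
  proof (rule prod.cong[OF refl])
    fix p assume "p \<in> set S"
    then have "B (fst p) = {snd p}"
      using realizable_set_label_unique[OF R, of "fst p" "snd p"] unfolding B_def by auto
    then show "measure_pmf.prob (?q (fst p)) (B (fst p)) = noisy_label_prob h p"
      by (simp add: measure_pmf_single noisy_label_prob_def)
  qed
  finally show ?thesis .
qed

lemma three_quarters_quarter_power_ge:
  fixes a e m j :: nat
  assumes "a + e \<le> m" "e \<le> j" "4 * j \<le> m"
  shows "(27/16::real)^j / 2^m \<le> (3/4)^a * (1/4)^e"
proof -
  have "(3/4::real)^m * (1/3)^j \<le> (3/4)^(a+e) * (1/3)^e"
    by (intro mult_mono power_decreasing assms) auto
  also have "\<dots> = (3/4)^a * (1/4)^e"
    by (simp add: power_add power_divide)
  finally have lower: "(3/4)^m * (1/3::real)^j \<le> (3/4)^a * (1/4)^e" .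
  have "(27/16::real)^j * 3^j = (3/2)^(4*j)"
    by (simp add: power_mult power_mult_distrib[symmetric] power_divide)
  also have "\<dots> \<le> (3/2)^m"
    by (intro power_increasing assms) auto
  finally have "(27/16::real)^j / 2^m \<le> (3/2)^m / 3^j / 2^m"
    by (simp add: field_simps)
  also have "\<dots> = (3/4)^m * (1/3)^j"
    by (simp add: power_divide field_simps power_mult_distrib[symmetric])
  finally show ?thesis using lower by linarith
qed

lemma prod_noisy_label_prob_ge:
  assumes "4 * card {p\<in>set S. h (fst p) \<noteq> snd p} \<le> length S"
  shows "(27/16::real)^(length S div 4) / 2^(length S) \<le> (\<Prod>p\<in>set S. noisy_label_prob h p)"
proof -
  let ?A = "{p\<in>set S. h (fst p) = snd p}" and ?E = "{p\<in>set S. h (fst p) \<noteq> snd p}"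
  have "card ?A + card ?E \<le> length S"
  proof -
    have "card ?A + card ?E = card (set S)"
      by (subst card_Un_disjoint[symmetric]) (auto intro: arg_cong[where f = card])
    then show ?thesis using card_length[of S] by linarith
  qed
  moreover have "card ?E \<le> length S div 4" using assms by linarith
  moreover have "4 * (length S div 4) \<le> length S" by simp
  ultimately have "(27/16::real)^(length S div 4) / 2^(length S) \<le> (3/4)^card ?A * (1/4)^card ?E"
    by (rule three_quarters_quarter_power_ge)
  also have "\<dots> = (\<Prod>p\<in>set S. noisy_label_prob h p)"
    unfolding noisy_label_prob_def by (subst prod.If_cases) (simp_all add: Int_def set_diff_eq)
  finally show ?thesis .
qed

lemma frac_clique_sum_prod_noisy_label_prob_le_1:
  assumes fc: "frac_clique H m \<delta>" and F: "finite F" "F \<subseteq> G_vertices H m"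
  shows "(\<Sum>S\<in>F. \<delta> S * (\<Prod>p\<in>set S. noisy_label_prob h p)) \<le> 1"
proof -
  define U where "U = (\<Union>S\<in>F. fst ` set S)"
  have "(\<Sum>S\<in>F. \<delta> S * (\<Prod>p\<in>set S. noisy_label_prob h p)) =
        (\<Sum>S\<in>F. \<delta> S * measure_pmf.prob (noisy_pmf h U) (version_space S))"
  proof (rule sum.cong[OF refl])
    fix S assume "S \<in> F"
    then have "realizable_set H S" "fst ` set S \<subseteq> U"
      using F(2) unfolding G_vertices_def U_def by auto
    moreover have "finite U" using F(1) unfolding U_def by simp
    ultimately show "\<delta> S * (\<Prod>p\<in>set S. noisy_label_prob h p) =
                     \<delta> S * measure_pmf.prob (noisy_pmf h U) (version_space S)"
      by (simp add: prob_noisy_pmf_version_space)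
  qed
  also have "\<dots> \<le> 1" by (rule frac_clique_sum_prob_version_space_le_1[OF fc F])
  finally show ?thesis .
qed

definition empirical_pmf :: "'a dataset \<Rightarrow> ('a \<times> bool) pmf" where
  "empirical_pmf S = map_pmf (\<lambda>i. S ! i) (pmf_of_set {..<length S})"

lemma loss_empirical_pmf:
  assumes "S \<noteq> []"
  shows "loss (empirical_pmf S) h = card {i\<in>{..<length S}. h (fst (S ! i)) \<noteq> snd (S ! i)} / length S"
proof -
  have "loss (empirical_pmf S) h =
        measure_pmf.prob (pmf_of_set {..<length S}) ((\<lambda>i. S ! i) -` {(x, y). h x \<noteq> y})"
    unfolding loss_def empirical_pmf_def by simp
  also have "\<dots> = card ({..<length S} \<inter> ((\<lambda>i. S ! i) -` {(x, y). h x \<noteq> y})) / card {..<length S}"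
    using assms by (subst measure_pmf_of_set) auto
  also have "{..<length S} \<inter> ((\<lambda>i. S ! i) -` {(x, y). h x \<noteq> y}) =
             {i\<in>{..<length S}. h (fst (S ! i)) \<noteq> snd (S ! i)}"
    by (auto simp: case_prod_beta)
  finally show ?thesis by simp
qed

lemma card_errors_le_if_loss_empirical_pmf_le:
  assumes "S \<noteq> []" "loss (empirical_pmf S) h \<le> 1/4"
  shows "4 * card {p\<in>set S. h (fst p) \<noteq> snd p} \<le> length S"
proof -
  let ?I = "{i\<in>{..<length S}. h (fst (S ! i)) \<noteq> snd (S ! i)}"
  have "{p\<in>set S. h (fst p) \<noteq> snd p} \<subseteq> (\<lambda>i. S ! i) ` ?I"
  proof
    fix p assume p: "p \<in> {p\<in>set S. h (fst p) \<noteq> snd p}"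
    then obtain i where "i < length S" "S ! i = p" by (auto simp: in_set_conv_nth)
    with p show "p \<in> (\<lambda>i. S ! i) ` ?I" by force
  qed
  then have "card {p\<in>set S. h (fst p) \<noteq> snd p} \<le> card ((\<lambda>i. S ! i) ` ?I)"
    by (intro card_mono) auto
  also have "\<dots> \<le> card ?I" by (rule card_image_le) auto
  finally have "card {p\<in>set S. h (fst p) \<noteq> snd p} \<le> card ?I" .
  moreover have "4 * real (card ?I) \<le> length S"
    using assms loss_empirical_pmf[OF assms(1), of h] by (simp add: field_simps)
  ultimately show ?thesis by linarith
qed

lemma realizable_dist_empirical_pmf:
  assumes "S \<noteq> []" "realizable_set H S"
  shows "realizable_dist H (empirical_pmf S)"
proof -
  obtain h where h: "h \<in> H" "\<forall>(x, y)\<in>set S. h x = y"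
    using assms(2) unfolding realizable_set_def by blast
  then have "{i\<in>{..<length S}. h (fst (S ! i)) \<noteq> snd (S ! i)} = {}"
    by (auto simp: case_prod_beta)
  then have "loss (empirical_pmf S) h = 0" using loss_empirical_pmf[OF assms(1)] by simp
  then show ?thesis unfolding realizable_dist_def using h(1) by (intro allI impI bexI[of _ h]) auto
qed

lemma (in prob_space) sum_weights_le_if_events_likely:
  assumes F: "finite F" and nonneg: "\<And>S. S \<in> F \<Longrightarrow> \<delta> S \<ge> 0"
    and events: "\<And>S. S \<in> F \<Longrightarrow> E S \<in> events" and likely: "\<And>S. S \<in> F \<Longrightarrow> prob (E S) \<ge> p"
    and bound: "\<And>\<omega>. \<omega> \<in> space M \<Longrightarrow> (\<Sum>S\<in>{S\<in>F. \<omega> \<in> E S}. \<delta> S) \<le> b"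
  shows "p * sum \<delta> F \<le> b"
proof -
  have int: "integrable M (\<lambda>\<omega>. \<delta> S * indicator (E S) \<omega>)" if "S \<in> F" for S
    using events[OF that] by (intro integrable_mult_right integrable_real_indicator) (simp_all add: emeasure_finite less_top[symmetric])
  have pointwise: "(\<Sum>S\<in>F. \<delta> S * indicator (E S) \<omega>) \<le> b" if "\<omega> \<in> space M" for \<omega>
  proof -
    have "(\<Sum>S\<in>F. \<delta> S * indicator (E S) \<omega>) = (\<Sum>S\<in>F. if \<omega> \<in> E S then \<delta> S else 0)"
      by (rule sum.cong) simp_all
    then show ?thesis using bound[OF that] by (simp add: sum.inter_filter[OF F])
  qed
  have "p * sum \<delta> F \<le> (\<Sum>S\<in>F. \<delta> S * prob (E S))"
    unfolding sum_distrib_left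
  proof (rule sum_mono)
    fix S assume "S \<in> F"
    show "p * \<delta> S \<le> \<delta> S * prob (E S)"
      using mult_left_mono[OF likely nonneg, OF \<open>S \<in> F\<close> \<open>S \<in> F\<close>] by (simp add: mult.commute)
  qed
  also have "\<dots> = expectation (\<lambda>\<omega>. \<Sum>S\<in>F. \<delta> S * indicator (E S) \<omega>)"
    using events by (subst Bochner_Integration.integral_sum[OF int]) (simp_all add: emeasure_finite less_top[symmetric])
  also have "\<dots> \<le> b"
    using int by (intro integral_le_const AE_I2 pointwise Bochner_Integration.integrable_sum) auto
  finally show ?thesis .
qed

text \<open>
  Under the noisy labelling of an accurate hypothesis each of its datasets is consistent with
  probability at least \<open>c\<close>, while the noisy labelling of one hypothesis carries clique weight at
  most \<open>1\<close>.
\<close>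

lemma frac_clique_sum_accurate_le_card:
  fixes H :: "('a \<Rightarrow> bool) set"
  assumes fc: "frac_clique H m \<delta>" and F: "finite F" "F \<subseteq> G_vertices H m"
    and m: "0 < m" and C: "finite C"
  shows "(27/16::real)^(m div 4) / 2^m * (\<Sum>S\<in>{S\<in>F. \<exists>h\<in>C. loss (empirical_pmf S) h \<le> 1/4}. \<delta> S)
           \<le> real (card C)"
proof -
  define c :: real where "c = (27/16)^(m div 4) / 2^m"
  define \<pi> :: "('a \<Rightarrow> bool) \<Rightarrow> 'a dataset \<Rightarrow> real" where "\<pi> h S = (\<Prod>p\<in>set S. noisy_label_prob h p)" for h S
  let ?A = "{S\<in>F. \<exists>h\<in>C. loss (empirical_pmf S) h \<le> 1/4}"
  have \<pi>_nonneg: "\<pi> h S \<ge> 0" for h S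
    unfolding \<pi>_def by (intro prod_nonneg) (simp add: less_imp_le noisy_label_prob_pos)
  have \<delta>_nonneg: "\<delta> S \<ge> 0" if "S \<in> F" for S
    using fc F(2) that unfolding frac_clique_def by auto
  have c_le: "c \<le> (\<Sum>h\<in>C. \<pi> h S)" if "S \<in> ?A" for S
  proof -
    from that obtain h where h: "h \<in> C" "loss (empirical_pmf S) h \<le> 1/4" and S: "S \<in> F" by blast
    then have "length S = m" using F(2) unfolding G_vertices_def by auto
    with m have "S \<noteq> []" by auto
    then have "c \<le> \<pi> h S"
      using prod_noisy_label_prob_ge[OF card_errors_le_if_loss_empirical_pmf_le[OF _ h(2)]]
      unfolding c_def \<pi>_def \<open>length S = m\<close> by simp
    also have "\<dots> \<le> (\<Sum>h\<in>C. \<pi> h S)" by (rule member_le_sum[OF h(1) \<pi>_nonneg C])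
    finally show ?thesis .
  qed
  have "c * sum \<delta> ?A = (\<Sum>S\<in>?A. \<delta> S * c)" by (simp add: sum_distrib_left mult.commute)
  also have "\<dots> \<le> (\<Sum>S\<in>?A. \<delta> S * (\<Sum>h\<in>C. \<pi> h S))"
    using c_le \<delta>_nonneg by (intro sum_mono mult_left_mono) auto
  also have "\<dots> \<le> (\<Sum>S\<in>F. \<delta> S * (\<Sum>h\<in>C. \<pi> h S))"
    using F(1) \<delta>_nonneg \<pi>_nonneg by (intro sum_mono2) (auto intro!: mult_nonneg_nonneg sum_nonneg)
  also have "\<dots> = (\<Sum>h\<in>C. \<Sum>S\<in>F. \<delta> S * \<pi> h S)"
    by (simp add: sum_distrib_left sum.swap[of _ C F])
  also have "\<dots> \<le> (\<Sum>h\<in>C. 1)"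
    unfolding \<pi>_def by (intro sum_mono frac_clique_sum_prod_noisy_label_prob_le_1[OF fc F])
  finally show ?thesis unfolding c_def by simp
qed

lemma frac_clique_sum_le_if_rep_ok:
  fixes H :: "('a \<Rightarrow> bool) set"
  assumes rep: "rep_ok H k" and m: "0 < m"
    and fc: "frac_clique H m \<delta>" and F: "finite F" "F \<subseteq> G_vertices H m"
  shows "3/4 * sum \<delta> F * (27/16)^(m div 4) \<le> real k * 2^m"
proof -
  obtain P :: "('a \<Rightarrow> bool) set measure" where P: "prob_space P"
    and Pk: "\<forall>C\<in>space P. finite C \<and> card C = k"
    and PD: "\<forall>D. realizable_dist H D \<longrightarrow>
          {C\<in>space P. \<exists>h\<in>C. loss D h \<le> 1/4} \<in> sets P \<and>
          measure P {C\<in>space P. \<exists>h\<in>C. loss D h \<le> 1/4} \<ge> 3/4"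
    using rep unfolding rep_ok_def by blast
  interpret P: prob_space P by (rule P)
  define c :: real where "c = (27/16)^(m div 4) / 2^m"
  have c_pos: "c > 0" unfolding c_def by simp
  have realizable: "realizable_dist H (empirical_pmf S)" if "S \<in> F" for S
    using that F(2) m by (intro realizable_dist_empirical_pmf) (auto simp: G_vertices_def)
  have "3/4 * sum \<delta> F \<le> real k / c"
  proof (rule P.sum_weights_le_if_events_likely[OF F(1)])
    show "\<delta> S \<ge> 0" if "S \<in> F" for S
      using fc F(2) that unfolding frac_clique_def by auto
    show "{C\<in>space P. \<exists>h\<in>C. loss (empirical_pmf S) h \<le> 1/4} \<in> P.events"
      "P.prob {C\<in>space P. \<exists>h\<in>C. loss (empirical_pmf S) h \<le> 1/4} \<ge> 3/4" if "S \<in> F" for S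
      using PD realizable[OF that] by auto
    fix C assume C: "C \<in> space P"
    then have "{S\<in>F. C \<in> {C\<in>space P. \<exists>h\<in>C. loss (empirical_pmf S) h \<le> 1/4}} =
               {S\<in>F. \<exists>h\<in>C. loss (empirical_pmf S) h \<le> 1/4}" by auto
    with frac_clique_sum_accurate_le_card[OF fc F m, of C] Pk C c_pos
    show "(\<Sum>S\<in>{S\<in>F. C \<in> {C\<in>space P. \<exists>h\<in>C. loss (empirical_pmf S) h \<le> 1/4}}. \<delta> S) \<le> real k / c"
      unfolding c_def[symmetric] by (simp add: field_simps)
  qed
  then show ?thesis
    using c_pos unfolding c_def by (simp add: field_simps)
qed

lemma omega_star_le_if_rep_ok:
  assumes "rep_ok H k" "0 < m"
  shows "omega_star H m \<le> ereal (4/3 * real k * 2^m / (27/16)^(m div 4))"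
  unfolding omega_star_def
proof (rule SUP_least)
  fix \<delta> assume "\<delta> \<in> {\<delta>. frac_clique H m \<delta>}"
  then have fc: "frac_clique H m \<delta>" by simp
  show "nn_sum \<delta> (G_vertices H m) \<le> ereal (4/3 * real k * 2^m / (27/16)^(m div 4))"
    unfolding nn_sum_def
  proof (rule SUP_least)
    fix F assume "F \<in> {F. F \<subseteq> G_vertices H m \<and> finite F}"
    then have "3/4 * sum \<delta> F * (27/16)^(m div 4) \<le> real k * 2^m"
      using frac_clique_sum_le_if_rep_ok[OF assms fc] by blast
    then show "ereal (sum \<delta> F) \<le> ereal (4/3 * real k * 2^m / (27/16)^(m div 4))"
      by (simp add: field_simps)
  qed
qed

theorem mainTheorem16:
  fixes H :: "('a::countable \<Rightarrow> bool) set"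
  assumes "RepDim H < \<infinity>"
  shows "CD_star_finite H"
proof -
  obtain k where rep: "rep_ok H k"
    using assms unfolding RepDim_def by (auto split: if_splits)
  obtain j where j: "4/3 * real k < (27/16::real)^j"
    using real_arch_pow[of "27/16" "4/3 * real k"] by auto
  have "m \<le> 4 * j + 3" if omega: "omega_star H m = ereal (2^m)" for m
  proof (rule ccontr)
    assume "\<not> m \<le> 4 * j + 3"
    then have "0 < m" "j \<le> m div 4" by linarith+
    then have "4/3 * real k < (27/16::real)^(m div 4)"
      using j power_increasing[of j "m div 4" "27/16::real"] by linarith
    then have "4/3 * real k * 2^m / (27/16)^(m div 4) < (2::real)^m"
      by (simp add: field_simps)
    with omega_star_le_if_rep_ok[OF rep \<open>0 < m\<close>] omega show False by simp
  qed
  then show ?thesis unfolding CD_star_finite_def by blast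
qed

end
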